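(* Let $A\in\mathbb{C}^{m\times n}$ have rank $r$ and $B\in\mathbb{C}^{m\times n}$ have rank $s$, with singular value decompositions $$A=U\begin{pmatrix}\Sigma_{1}&0\\0&0\end{pmatrix}V^{\ast}=U_{1}\Sigma_{1}V_{1}^{\ast},\qquad B=\widetilde{U}\begin{pmatrix}\widetilde{\Sigma}_{1}&0\\0&0\end{pmatrix}\widetilde{V}^{\ast}=\widetilde{U}_{1}\widetilde{\Sigma}_{1}\widetilde{V}_{1}^{\ast},$$ where $U=(U_{1},U_{2})$ and $\widetilde{U}=(\widetilde{U}_{1},\widetilde{U}_{2})$ are $m\times m$ unitary, $V=(V_{1},V_{2})$ and $\widetilde{V}=(\widetilde{V}_{1},\widetilde{V}_{2})$ are $n\times n$ unitary, $U_{1}\in\mathbb{C}^{m\times r}$, $V_{1}\in\mathbb{C}^{n\times r}$, $\widetilde{U}_{1}\in\mathbb{C}^{m\times s}$, $\widetilde{V}_{1}\in\mathbb{C}^{n\times s}$, $\Sigma_{1}=\operatorname{diag}(\sigma_{1},\ldots,\sigma_{r})$ with $\sigma_{1}\geq\cdots\geq\sigma_{r}>0$, and $\widetilde{\Sigma}_{1}=\operatorname{diag}(\widetilde{\sigma}_{1},\ldots,\widetilde{\sigma}_{s})$ with $\widetilde{\sigma}_{1}\geq\cdots\geq\widetilde{\sigma}_{s}>0$. Let $E=B-A$. Then $$\|B^{\dagger}-A^{\dagger}\|_{F}^{2}\leq\|B^{\dagger}\|_{2}^{2}\|\widetilde{U}_{1}^{\ast}U_{2}\|_{F}^{2}+\|A^{\dagger}\|_{2}^{2}\|\widetilde{V}_{2}^{\ast}V_{1}\|_{F}^{2}+\|B^{\dagger}EA^{\dagger}\|_{F}^{2},$$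 $$\|B^{\dagger}-A^{\dagger}\|_{F}^{2}\leq\|A^{\dagger}\|_{2}^{2}\|\widetilde{U}_{2}^{\ast}U_{1}\|_{F}^{2}+\|B^{\dagger}\|_{2}^{2}\|\widetilde{V}_{1}^{\ast}V_{2}\|_{F}^{2}+\|A^{\dagger}EB^{\dagger}\|_{F}^{2},$$ and $$\|B^{\dagger}-A^{\dagger}\|_{F}^{2}\geq\frac{\|\widetilde{U}_{1}^{\ast}U_{2}\|_{F}^{2}}{\|B\|_{2}^{2}}+\frac{\|\widetilde{V}_{2}^{\ast}V_{1}\|_{F}^{2}}{\|A\|_{2}^{2}}+\|B^{\dagger}EA^{\dagger}\|_{F}^{2},$$ $$\|B^{\dagger}-A^{\dagger}\|_{F}^{2}\geq\frac{\|\widetilde{U}_{2}^{\ast}U_{1}\|_{F}^{2}}{\|A\|_{2}^{2}}+\frac{\|\widetilde{V}_{1}^{\ast}V_{2}\|_{F}^{2}}{\|B\|_{2}^{2}}+\|A^{\dagger}EB^{\dagger}\|_{F}^{2}.$$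
   Context: $M^{\dagger}$ denotes the Moore–Penrose inverse of $M$, $M^{\ast}$ the conjugate transpose, $\|\cdot\|_{2}$ the spectral norm and $\|\cdot\|_{F}$ the Frobenius norm. *)

theory Defs
  imports Complex_Main "Jordan_Normal_Form.Schur_Decomposition" "Jordan_Normal_Form.DL_Rank"
begin

definition unitary_mat :: "nat \<Rightarrow> complex mat \<Rightarrow> bool" where
  "unitary_mat n U \<longleftrightarrow> U \<in> carrier_mat n n \<and>
     U * mat_adjoint U = 1\<^sub>m n \<and> mat_adjoint U * U = 1\<^sub>m n"

definition col_block :: "complex mat \<Rightarrow> nat \<Rightarrow> nat \<Rightarrow> complex mat" where
  "col_block M a b = mat (dim_row M) (b - a) (\<lambda>(i,j). M $$ (i, a + j))"

definition vnorm :: "complex vec \<Rightarrow> real" where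
  "vnorm x = sqrt (\<Sum>i<dim_vec x. (cmod (x $ i))\<^sup>2)"

definition frob_norm :: "complex mat \<Rightarrow> real" where
  "frob_norm M = sqrt (\<Sum>i<dim_row M. \<Sum>j<dim_col M. (cmod (M $$ (i,j)))\<^sup>2)"

definition spec_norm :: "complex mat \<Rightarrow> real" where
  "spec_norm M = Sup {vnorm (M *\<^sub>v x) | x. x \<in> carrier_vec (dim_col M) \<and> vnorm x \<le> 1}"

definition is_mp_inverse :: "complex mat \<Rightarrow> complex mat \<Rightarrow> bool" where
  "is_mp_inverse A X \<longleftrightarrow> X \<in> carrier_mat (dim_col A) (dim_row A) \<and>
     A * X * A = A \<and> X * A * X = X \<and>
     mat_adjoint (A * X) = A * X \<and> mat_adjoint (X * A) = X * A"

definition mp_inverse :: "complex mat \<Rightarrow> complex mat" where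
  "mp_inverse A = (THE X. is_mp_inverse A X)"

definition sv_block :: "nat \<Rightarrow> nat \<Rightarrow> nat \<Rightarrow> (nat \<Rightarrow> real) \<Rightarrow> complex mat" where
  "sv_block m n r \<sigma> = four_block_mat (mat_diag r (\<lambda>i. complex_of_real (\<sigma> i)))
      (0\<^sub>m r (n - r)) (0\<^sub>m (m - r) r) (0\<^sub>m (m - r) (n - r))"

end

theory Submission
  imports Defs "HOL-Analysis.L2_Norm"
begin

text \<open>
  Rotating by the singular vectors gives
  \<open>Vt\<^sup>* (B\<^sup>\<dagger> - A\<^sup>\<dagger>) U = \<Sigma>t\<^sup>\<dagger> Ut\<^sup>* U - Vt\<^sup>* V \<Sigma>\<^sup>\<dagger>\<close>.
  Split its rows at \<open>s\<close> and its columns at \<open>r\<close>: the leading block is minus the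
  leading block of \<open>Vt\<^sup>* B\<^sup>\<dagger> E A\<^sup>\<dagger> U\<close> (which vanishes outside it), the
  off-diagonal blocks are \<open>\<Sigma>t\<^sub>1\<^sup>-\<^sup>1 Ut\<^sub>1\<^sup>* U\<^sub>2\<close> and \<open>-Vt\<^sub>2\<^sup>* V\<^sub>1 \<Sigma>\<^sub>1\<^sup>-\<^sup>1\<close>, and the
  trailing block is zero. Unitary invariance of the Frobenius norm therefore yields
  \<open>\<parallel>B\<^sup>\<dagger> - A\<^sup>\<dagger>\<parallel>\<^sub>F\<^sup>2 = \<parallel>\<Sigma>t\<^sub>1\<^sup>-\<^sup>1 Ut\<^sub>1\<^sup>* U\<^sub>2\<parallel>\<^sub>F\<^sup>2 + \<parallel>Vt\<^sub>2\<^sup>* V\<^sub>1 \<Sigma>\<^sub>1\<^sup>-\<^sup>1\<parallel>\<^sub>F\<^sup>2 + \<parallel>B\<^sup>\<dagger> E A\<^sup>\<dagger>\<parallel>\<^sub>F\<^sup>2\<close>,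
  and the inequalities follow from \<open>1/\<parallel>B\<parallel>\<^sub>2 \<le> 1/\<sigma>t\<^sub>i \<le> \<parallel>B\<^sup>\<dagger>\<parallel>\<^sub>2\<close> and the
  analogous bounds for \<open>A\<close>. Exchanging \<open>A\<close> and \<open>B\<close> gives the second pair.
\<close>

subsection \<open>Adjoints and rectangular diagonal matrices\<close>

lemma mat_adjoint_altdef:
  "mat_adjoint A = mat (dim_col A) (dim_row A) (\<lambda>(i,j). cnj (A $$ (j,i)))"
  unfolding mat_adjoint_def by (intro eq_matI) (auto simp: mat_of_rows_index)

lemma dim_mat_adjoint [simp]:
  "dim_row (mat_adjoint (A::complex mat)) = dim_col A"
  "dim_col (mat_adjoint (A::complex mat)) = dim_row A"
  unfolding mat_adjoint_altdef by auto

lemma index_mat_adjoint [simp]: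
  "i < dim_col (A::complex mat) \<Longrightarrow> j < dim_row A \<Longrightarrow> mat_adjoint A $$ (i,j) = cnj (A $$ (j,i))"
  unfolding mat_adjoint_altdef by auto

lemma mat_adjoint_adjoint [simp]: "mat_adjoint (mat_adjoint A) = (A::complex mat)"
  by (intro eq_matI) auto

lemma mat_adjoint_mult:
  "dim_col A = dim_row B \<Longrightarrow> mat_adjoint (A * B) = mat_adjoint B * mat_adjoint (A::complex mat)"
  by (intro eq_matI) (auto simp: scalar_prod_def intro!: sum.cong)

lemma assoc_mult_mat_dims:
  "dim_col A = dim_row B \<Longrightarrow> dim_col B = dim_row C \<Longrightarrow> A * B * C = A * (B * (C::'a::comm_ring_1 mat))"
  by (rule assoc_mult_mat[of A "dim_row A" "dim_col A" B "dim_col B" C "dim_col C"]) auto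

lemma mat_adjoint_mult3:
  assumes "dim_col A = dim_row B" "dim_col B = dim_row C"
  shows "mat_adjoint (A * B * C) = mat_adjoint C * mat_adjoint B * mat_adjoint (A::complex mat)"
  using assms by (simp add: mat_adjoint_mult assoc_mult_mat_dims)

lemma mult_minus_mult_distrib_mat:
  fixes M N :: "'a::comm_ring_1 mat"
  assumes "X \<in> carrier_mat k n" "M \<in> carrier_mat n m" "N \<in> carrier_mat n m" "Y \<in> carrier_mat m l"
  shows "X * (M - N) * Y = X * M * Y - X * N * Y"
  using assms by (simp add: mult_minus_distrib_mat minus_mult_distrib_mat[of _ k m])

lemma unitary_matD:
  assumes "unitary_mat n U"
  shows "U \<in> carrier_mat n n" "mat_adjoint U \<in> carrier_mat n n"
    "U * mat_adjoint U = 1\<^sub>m n" "mat_adjoint U * U = 1\<^sub>m n"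
  using assms unfolding unitary_mat_def by auto

lemma unitary_adjoint_mult_cancel:
  assumes "unitary_mat n U" and "dim_row Z = n"
  shows "mat_adjoint U * (U * Z) = Z"
  using unitary_matD[OF assms(1)] assms(2)
  by (simp add: assoc_mult_mat_dims[symmetric])

lemma dim_col_block [simp]:
  "dim_row (col_block M a b) = dim_row M" "dim_col (col_block M a b) = b - a"
  unfolding col_block_def by simp_all

lemma index_adjoint_col_block_mult:
  assumes "X \<in> carrier_mat k k1" "Y \<in> carrier_mat k k2"
    and "i < b1 - a1" "j < b2 - a2" "b1 \<le> k1" "b2 \<le> k2"
  shows "(mat_adjoint (col_block X a1 b1) * col_block Y a2 b2) $$ (i,j)
    = (mat_adjoint X * Y) $$ (a1 + i, a2 + j)"
  using assms by (auto simp: col_block_def scalar_prod_def intro!: sum.cong)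

definition rect_diag :: "nat \<Rightarrow> nat \<Rightarrow> nat \<Rightarrow> (nat \<Rightarrow> 'a::zero) \<Rightarrow> 'a mat" where
  "rect_diag m n r d = mat m n (\<lambda>(i,j). if i = j \<and> i < r then d i else 0)"

lemma rect_diag_carrier [simp]: "rect_diag m n r d \<in> carrier_mat m n"
  and dim_rect_diag [simp]: "dim_row (rect_diag m n r d) = m" "dim_col (rect_diag m n r d) = n"
  unfolding rect_diag_def by auto

lemma rect_diag_cong: "(\<And>i. i < r \<Longrightarrow> d i = e i) \<Longrightarrow> rect_diag m n r d = rect_diag m n r e"
  unfolding rect_diag_def by (intro eq_matI) auto

lemma sv_block_eq_rect_diag:
  "r \<le> m \<Longrightarrow> r \<le> n \<Longrightarrow> sv_block m n r \<sigma> = rect_diag m n r (\<lambda>i. complex_of_real (\<sigma> i))"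
  unfolding sv_block_def rect_diag_def by (intro eq_matI) (auto simp: mat_diag_def)

lemma rect_diag_mult_left:
  fixes Q :: "'a::semiring_0 mat"
  assumes Q: "Q \<in> carrier_mat n l" and "r \<le> n"
  shows "rect_diag m n r d * Q = mat m l (\<lambda>(i,j). if i < r then d i * Q $$ (i,j) else 0)"
proof (intro eq_matI, goal_cases)
  case (1 i j)
  then have "(rect_diag m n r d * Q) $$ (i,j) = (\<Sum>k<n. (if i = k \<and> i < r then d i else 0) * Q $$ (k,j))"
    using Q unfolding rect_diag_def by (auto simp: scalar_prod_def lessThan_atLeast0 intro!: sum.cong)
  also have "\<dots> = (if i < r then d i * Q $$ (i,j) else 0)"
    using assms by (auto simp: if_distrib[of "\<lambda>x. x * _"] cong: if_cong)
  finally show ?case using 1 by simp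
qed (use Q in auto)

lemma rect_diag_mult_right:
  fixes Q :: "'a::semiring_0 mat"
  assumes Q: "Q \<in> carrier_mat l m" and "r \<le> m"
  shows "Q * rect_diag m n r d = mat l n (\<lambda>(i,j). if j < r then Q $$ (i,j) * d j else 0)"
proof (intro eq_matI, goal_cases)
  case (1 i j)
  then have "(Q * rect_diag m n r d) $$ (i,j) = (\<Sum>k<m. Q $$ (i,k) * (if k = j \<and> k < r then d k else 0))"
    using Q unfolding rect_diag_def by (auto simp: scalar_prod_def lessThan_atLeast0 intro!: sum.cong)
  also have "\<dots> = (\<Sum>k<m. if k = j then (if j < r then Q $$ (i,j) * d j else 0) else 0)"
    by (intro sum.cong) auto
  also have "\<dots> = (if j < r then Q $$ (i,j) * d j else 0)"
    using assms 1 by auto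
  finally show ?case using 1 by simp
qed (use Q in auto)

lemma rect_diag_mult_rect_diag:
  fixes d e :: "nat \<Rightarrow> 'a::semiring_0"
  assumes "r \<le> m" "r \<le> n"
  shows "rect_diag m n r d * rect_diag n l r e = rect_diag m l r (\<lambda>i. d i * e i)"
  using assms by (subst rect_diag_mult_left[of _ n l]) (auto simp: rect_diag_def)

lemma rect_diag_adjoint:
  "mat_adjoint (rect_diag m n r d) = rect_diag n m r (\<lambda>i. cnj (d i))"
  by (intro eq_matI) (auto simp: rect_diag_def)

subsection \<open>Frobenius norm\<close>

lemma frob_norm_sq:
  "(frob_norm M)\<^sup>2 = (\<Sum>i<dim_row M. \<Sum>j<dim_col M. (cmod (M $$ (i,j)))\<^sup>2)"
  unfolding frob_norm_def by (simp add: sum_nonneg)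

lemma frob_norm_sq_eq_trace:
  "complex_of_real ((frob_norm M)\<^sup>2) = (\<Sum>j<dim_col M. (mat_adjoint M * M) $$ (j,j))"
  unfolding frob_norm_sq of_real_sum
  by (subst sum.swap, intro sum.cong refl)
    (auto simp: scalar_prod_def complex_norm_square[unfolded of_real_power] mult.commute
      lessThan_atLeast0 intro!: sum.cong)

lemma frob_norm_eq_iff_sq: "frob_norm M = frob_norm N \<longleftrightarrow> (frob_norm M)\<^sup>2 = (frob_norm N)\<^sup>2"
  unfolding frob_norm_def by (simp add: sum_nonneg)

lemma frob_norm_adjoint [simp]: "frob_norm (mat_adjoint M) = frob_norm M"
  unfolding frob_norm_eq_iff_sq frob_norm_sq by (subst sum.swap) (intro sum.cong refl, auto)

lemma frob_norm_uminus [simp]: "frob_norm (- M) = frob_norm M"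
  unfolding frob_norm_def by simp

lemma frob_norm_isometry_mult:
  assumes M: "M \<in> carrier_mat k l" and X: "X \<in> carrier_mat k' k" and XX: "mat_adjoint X * X = 1\<^sub>m k"
  shows "frob_norm (X * M) = frob_norm M"
proof -
  have "mat_adjoint (X * M) * (X * M) = mat_adjoint M * ((mat_adjoint X * X) * M)"
    using M X by (simp add: mat_adjoint_mult assoc_mult_mat_dims)
  also have "\<dots> = mat_adjoint M * M" using XX M by simp
  finally have "complex_of_real ((frob_norm (X * M))\<^sup>2) = complex_of_real ((frob_norm M)\<^sup>2)"
    unfolding frob_norm_sq_eq_trace using M X by simp
  then show ?thesis unfolding frob_norm_eq_iff_sq by (simp only: of_real_eq_iff)
qed

lemma frob_norm_mult_coisometry:
  assumes M: "M \<in> carrier_mat k l" and Y: "Y \<in> carrier_mat l l'" and YY: "Y * mat_adjoint Y = 1\<^sub>m l"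
  shows "frob_norm (M * Y) = frob_norm M"
proof -
  have "mat_adjoint (M * Y) = mat_adjoint Y * mat_adjoint M"
    using M Y by (simp add: mat_adjoint_mult)
  then have "frob_norm (M * Y) = frob_norm (mat_adjoint Y * mat_adjoint M)"
    by (metis frob_norm_adjoint)
  also have "\<dots> = frob_norm (mat_adjoint M)"
    by (rule frob_norm_isometry_mult[of "mat_adjoint M" l k "mat_adjoint Y" l'])
      (use M Y YY in \<open>auto intro!: carrier_matI\<close>)
  finally show ?thesis by simp
qed

lemma frob_norm_unitary_conj:
  assumes X: "unitary_mat k X" and Y: "unitary_mat l Y" and M: "M \<in> carrier_mat k l"
  shows "frob_norm (mat_adjoint X * M * Y) = frob_norm M"
proof -
  note X = unitary_matD[OF X] and Y = unitary_matD[OF Y]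
  have "frob_norm (mat_adjoint X * M * Y) = frob_norm (mat_adjoint X * M)"
    by (rule frob_norm_mult_coisometry[OF mult_carrier_mat[OF X(2) M] Y(1) Y(3)])
  also have "\<dots> = frob_norm M"
    using frob_norm_isometry_mult[OF M X(2)] X(3) by simp
  finally show ?thesis .
qed

lemma frob_norm_minus_commute:
  assumes "X \<in> carrier_mat k l" "Y \<in> carrier_mat k l"
  shows "frob_norm (X - Y) = frob_norm (Y - X)"
proof -
  have "X - Y = - (Y - X)" using assms by (intro eq_matI) auto
  then show ?thesis by simp
qed

lemma frob_norm_mult_minus_commute:
  assumes "X \<in> carrier_mat k n" "M \<in> carrier_mat n m" "N \<in> carrier_mat n m" "Y \<in> carrier_mat m l"
  shows "frob_norm (X * (M - N) * Y) = frob_norm (X * (N - M) * Y)"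
proof -
  have "X * M * Y \<in> carrier_mat k l" "X * N * Y \<in> carrier_mat k l"
    using assms by (meson mult_carrier_mat)+
  then show ?thesis
    unfolding mult_minus_mult_distrib_mat[OF assms] mult_minus_mult_distrib_mat[OF assms(1,3,2,4)]
    by (rule frob_norm_minus_commute)
qed

lemma frob_norm_adjoint_mult_commute:
  assumes "dim_row X = dim_row Y"
  shows "frob_norm (mat_adjoint X * Y) = frob_norm (mat_adjoint Y * X)"
proof -
  have "mat_adjoint (mat_adjoint X * Y) = mat_adjoint Y * X"
    using assms by (simp add: mat_adjoint_mult)
  then show ?thesis by (metis frob_norm_adjoint)
qed

lemma frob_norm_sq_weighted_bounds:
  assumes "\<And>i j. i < dim_row M \<Longrightarrow> j < dim_col M \<Longrightarrow> c \<le> w i j \<and> w i j \<le> C"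
  shows "c * (frob_norm M)\<^sup>2 \<le> (\<Sum>i<dim_row M. \<Sum>j<dim_col M. (cmod (M $$ (i,j)))\<^sup>2 * w i j)"
    and "(\<Sum>i<dim_row M. \<Sum>j<dim_col M. (cmod (M $$ (i,j)))\<^sup>2 * w i j) \<le> C * (frob_norm M)\<^sup>2"
  unfolding frob_norm_sq sum_distrib_left using assms
  by (auto intro!: sum_mono simp: mult.commute[of c] mult.commute[of C] mult_left_mono)

lemma sum_lessThan_interval_indicator:
  fixes n :: nat
  assumes "b \<le> n"
  shows "(\<Sum>i<n. if a \<le> i \<and> i < b then f i else 0) = (\<Sum>i<b - a. f (a + i))"
proof -
  have "(\<Sum>i<n. if a \<le> i \<and> i < b then f i else 0) = (\<Sum>i\<in>{a..<b}. f i)"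
    by (rule sum.mono_neutral_cong_right) (use assms in auto)
  also have "\<dots> = (\<Sum>i<b - a. f (a + i))"
  proof (cases "a \<le> b")
    case True
    then show ?thesis
      using sum.shift_bounds_nat_ivl[of f 0 a "b - a"] by (simp add: lessThan_atLeast0 add.commute)
  qed simp
  finally show ?thesis .
qed

lemma sum_sum_block_indicator:
  fixes n m :: nat
  assumes "b \<le> n" "d \<le> m"
  shows "(\<Sum>i<n. \<Sum>j<m. if a \<le> i \<and> i < b \<and> c \<le> j \<and> j < d then f i j else 0)
    = (\<Sum>i<b - a. \<Sum>j<d - c. f (a + i) (c + j))"
proof -
  have "(\<Sum>j<m. if a \<le> i \<and> i < b \<and> c \<le> j \<and> j < d then f i j else 0)
      = (if a \<le> i \<and> i < b then \<Sum>j<d - c. f i (c + j) else 0)" for i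
    using sum_lessThan_interval_indicator[OF assms(2), of c "f i"] by auto
  then show ?thesis
    using sum_lessThan_interval_indicator[OF assms(1), of a "\<lambda>i. \<Sum>j<d - c. f i (c + j)"] by simp
qed

subsection \<open>Moore--Penrose inverses\<close>

lemma is_mp_inverse_unique:
  assumes A: "A \<in> carrier_mat m n" and X: "is_mp_inverse A X" and Y: "is_mp_inverse A Y"
  shows "X = Y"
proof -
  have "X \<in> carrier_mat n m" "Y \<in> carrier_mat n m"
    using X Y A unfolding is_mp_inverse_def by auto
  note dims = carrier_matD[OF A] carrier_matD[OF this(1)] carrier_matD[OF this(2)]
  have X': "A * (X * A) = A" "X * (A * X) = X"
    "mat_adjoint X * mat_adjoint A = A * X" "mat_adjoint A * mat_adjoint X = X * A"
    using X dims unfolding is_mp_inverse_def by (auto simp: assoc_mult_mat_dims mat_adjoint_mult)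
  have Y': "A * (Y * A) = A" "Y * (A * Y) = Y"
    "mat_adjoint Y * mat_adjoint A = A * Y" "mat_adjoint A * mat_adjoint Y = Y * A"
    using Y dims unfolding is_mp_inverse_def by (auto simp: assoc_mult_mat_dims mat_adjoint_mult)
  have AY: "mat_adjoint A = mat_adjoint A * (A * Y)"
  proof -
    have "mat_adjoint A = mat_adjoint (A * (Y * A))" using Y' by simp
    also have "\<dots> = mat_adjoint A * (mat_adjoint Y * mat_adjoint A)"
      using dims by (simp add: mat_adjoint_mult assoc_mult_mat_dims)
    finally show ?thesis using Y' by simp
  qed
  have XA: "mat_adjoint A = (X * A) * mat_adjoint A"
  proof -
    have "mat_adjoint A = mat_adjoint (A * (X * A))" using X' by simp
    also have "\<dots> = (mat_adjoint A * mat_adjoint X) * mat_adjoint A"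
      using dims by (simp add: mat_adjoint_mult)
    finally show ?thesis using X' by simp
  qed
  have "X = X * (mat_adjoint X * mat_adjoint A)" using X' by simp
  also have "\<dots> = X * (mat_adjoint X * (mat_adjoint A * (A * Y)))" by (subst AY) (rule refl)
  also have "\<dots> = X * (A * Y)" using X' dims by (simp add: assoc_mult_mat_dims[symmetric])
  finally have X_eq: "X = X * (A * Y)" .
  have "Y = (mat_adjoint A * mat_adjoint Y) * Y" using Y' dims by (simp add: assoc_mult_mat_dims)
  also have "\<dots> = (((X * A) * mat_adjoint A) * mat_adjoint Y) * Y" by (subst XA) (rule refl)
  also have "\<dots> = X * (A * Y)" using Y' dims by (simp add: assoc_mult_mat_dims)
  finally show ?thesis using X_eq by simp
qed

lemma mp_inverse_eqI: "A \<in> carrier_mat m n \<Longrightarrow> is_mp_inverse A X \<Longrightarrow> mp_inverse A = X"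
  unfolding mp_inverse_def using is_mp_inverse_unique by blast

lemma is_mp_inverse_unitary_conj:
  assumes D: "D \<in> carrier_mat m n" and P: "is_mp_inverse D P"
    and U: "unitary_mat m U" and V: "unitary_mat n V"
  shows "is_mp_inverse (U * D * mat_adjoint V) (V * P * mat_adjoint U)"
proof -
  have "P \<in> carrier_mat n m" using P D unfolding is_mp_inverse_def by auto
  note dims = carrier_matD[OF D] carrier_matD[OF this] carrier_matD[OF unitary_matD(1)[OF U]]
    carrier_matD[OF unitary_matD(1)[OF V]]
  note cancel = unitary_adjoint_mult_cancel[OF U] unitary_adjoint_mult_cancel[OF V]
  have DP: "D * (P * D) = D" "P * (D * P) = P"
    "mat_adjoint (D * P) = D * P" "mat_adjoint (P * D) = P * D"
    using P dims unfolding is_mp_inverse_def by (auto simp: assoc_mult_mat_dims)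
  let ?A = "U * D * mat_adjoint V" and ?X = "V * P * mat_adjoint U"
  have AX: "?A * ?X = U * (D * P) * mat_adjoint U" and XA: "?X * ?A = V * (P * D) * mat_adjoint V"
    using dims by (simp_all add: assoc_mult_mat_dims cancel)
  have "?A * ?X * ?A = U * (D * (P * D)) * mat_adjoint V"
    and "?X * ?A * ?X = V * (P * (D * P)) * mat_adjoint U"
    using dims by (simp_all add: assoc_mult_mat_dims cancel)
  then have penrose: "?A * ?X * ?A = ?A" "?X * ?A * ?X = ?X"
    unfolding DP by simp_all
  have hermitian: "mat_adjoint (?A * ?X) = ?A * ?X" "mat_adjoint (?X * ?A) = ?X * ?A"
    unfolding AX XA using dims DP by (simp_all add: mat_adjoint_mult3)
  have X_carrier: "?X \<in> carrier_mat (dim_col ?A) (dim_row ?A)"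
    using dims by (intro carrier_matI) simp_all
  show ?thesis
    unfolding is_mp_inverse_def by (intro conjI) (fact X_carrier penrose hermitian)+
qed

lemma is_mp_inverse_rect_diag:
  assumes "r \<le> m" "r \<le> n" and nz: "\<And>i. i < r \<Longrightarrow> d i \<noteq> 0"
  shows "is_mp_inverse (rect_diag m n r d) (rect_diag n m r (\<lambda>i. inverse (d i)))"
proof -
  have "rect_diag m n r d * rect_diag n m r (\<lambda>i. inverse (d i)) = rect_diag m m r (\<lambda>i. 1)"
    "rect_diag n m r (\<lambda>i. inverse (d i)) * rect_diag m n r d = rect_diag n n r (\<lambda>i. 1)"
    using assms by (simp_all add: rect_diag_mult_rect_diag, (intro rect_diag_cong, simp)+)
  then show ?thesis
    unfolding is_mp_inverse_def using assms by (simp add: rect_diag_mult_rect_diag rect_diag_adjoint)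
qed

lemma mp_inverse_svd:
  assumes U: "unitary_mat m U" and V: "unitary_mat n V" and r: "r \<le> m" "r \<le> n"
    and pos: "\<forall>i<r. 0 < \<sigma> i"
  shows "mp_inverse (U * sv_block m n r \<sigma> * mat_adjoint V)
    = V * rect_diag n m r (\<lambda>i. complex_of_real (1 / \<sigma> i)) * mat_adjoint U"
proof -
  let ?S = "rect_diag m n r (\<lambda>i. complex_of_real (\<sigma> i))"
  have "rect_diag n m r (\<lambda>i. inverse (complex_of_real (\<sigma> i)))
      = rect_diag n m r (\<lambda>i. complex_of_real (1 / \<sigma> i))"
    by (intro rect_diag_cong) (simp add: divide_inverse)
  moreover have "is_mp_inverse ?S (rect_diag n m r (\<lambda>i. inverse (complex_of_real (\<sigma> i))))"
    using pos by (intro is_mp_inverse_rect_diag[OF r]) auto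
  ultimately have "is_mp_inverse (U * ?S * mat_adjoint V)
      (V * rect_diag n m r (\<lambda>i. complex_of_real (1 / \<sigma> i)) * mat_adjoint U)"
    using is_mp_inverse_unitary_conj[OF rect_diag_carrier _ U V] by simp
  moreover have "U * ?S * mat_adjoint V \<in> carrier_mat m n"
    using unitary_matD(1)[OF U] unitary_matD(2)[OF V] by (meson mult_carrier_mat rect_diag_carrier)
  ultimately show ?thesis by (simp add: sv_block_eq_rect_diag[OF r] mp_inverse_eqI)
qed

subsection \<open>Spectral norm\<close>

lemma vnorm_eq_L2_set: "vnorm x = L2_set (\<lambda>i. cmod (x $ i)) {..<dim_vec x}"
  unfolding vnorm_def L2_set_def by simp

lemma vnorm_mult_mat_vec_le:
  assumes M: "M \<in> carrier_mat k l" and x: "x \<in> carrier_vec l" and x1: "vnorm x \<le> 1"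
  shows "vnorm (M *\<^sub>v x) \<le> (\<Sum>i<k. \<Sum>j<l. cmod (M $$ (i,j)))"
proof -
  have x_entry: "cmod (x $ j) \<le> 1" if "j < l" for j
    using member_le_L2_set[of "{..<dim_vec x}" j "\<lambda>i. cmod (x $ i)"] x x1 that
    by (simp add: vnorm_eq_L2_set)
  have "vnorm (M *\<^sub>v x) \<le> (\<Sum>i<k. cmod ((M *\<^sub>v x) $ i))"
    using L2_set_le_sum_abs[of "\<lambda>i. cmod ((M *\<^sub>v x) $ i)"] M
    by (simp add: vnorm_eq_L2_set del: index_mult_mat_vec)
  also have "\<dots> \<le> (\<Sum>i<k. \<Sum>j<l. cmod (M $$ (i,j) * x $ j))"
    using M x by (intro sum_mono)
      (auto simp: scalar_prod_def lessThan_atLeast0 intro!: order.trans[OF norm_sum])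
  also have "\<dots> \<le> (\<Sum>i<k. \<Sum>j<l. cmod (M $$ (i,j)))"
    using x_entry by (intro sum_mono) (auto simp: norm_mult intro: mult_left_le)
  finally show ?thesis .
qed

lemma vnorm_le_spec_norm:
  assumes M: "M \<in> carrier_mat k l" and "x \<in> carrier_vec l" and "vnorm x \<le> 1"
  shows "vnorm (M *\<^sub>v x) \<le> spec_norm M"
  unfolding spec_norm_def
proof (rule cSup_upper)
  show "vnorm (M *\<^sub>v x) \<in> {vnorm (M *\<^sub>v x) |x. x \<in> carrier_vec (dim_col M) \<and> vnorm x \<le> 1}"
    using assms by auto
  show "bdd_above {vnorm (M *\<^sub>v x) |x. x \<in> carrier_vec (dim_col M) \<and> vnorm x \<le> 1}"
    unfolding bdd_above_def using vnorm_mult_mat_vec_le[OF M] M by auto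
qed

lemma vnorm_unitary_col_scaled:
  assumes W: "unitary_mat k W" and j: "j < k"
  shows "vnorm (vec k (\<lambda>i. W $$ (i,j) * c)) = cmod c"
proof -
  have "(mat_adjoint W * W) $$ (j,j) = 1" using unitary_matD(4)[OF W] j by simp
  then have "complex_of_real (\<Sum>i<k. (cmod (W $$ (i,j)))\<^sup>2) = 1"
    using unitary_matD(1)[OF W] j
    by (simp add: scalar_prod_def lessThan_atLeast0 complex_norm_square[unfolded of_real_power] mult.commute)
  then have "(\<Sum>i<k. (cmod (W $$ (i,j)))\<^sup>2) = 1" by (simp only: of_real_eq_1_iff)
  then show ?thesis
    unfolding vnorm_def by (simp add: norm_mult power_mult_distrib sum_distrib_right[symmetric])
qed

text \<open>The unit vector \<open>V e\<^sub>j\<close> is mapped to \<open>d\<^sub>j U e\<^sub>j\<close>.\<close>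

lemma norm_le_spec_norm_unitary_conj_rect_diag:
  assumes U: "unitary_mat m U" and V: "unitary_mat n V" and r: "r \<le> m" "r \<le> n" and j: "j < r"
  shows "cmod (d j) \<le> spec_norm (U * rect_diag m n r d * mat_adjoint V)"
proof -
  note U' = unitary_matD[OF U] and V' = unitary_matD[OF V]
  let ?M = "U * rect_diag m n r d * mat_adjoint V"
  have M: "?M \<in> carrier_mat m n" using U'(1) V'(2) by (meson mult_carrier_mat rect_diag_carrier)
  have "?M * V = U * rect_diag m n r d"
    using U' V' by (simp add: assoc_mult_mat_dims carrier_matD)
  also have "\<dots> = mat m n (\<lambda>(i,j). if j < r then U $$ (i,j) * d j else 0)"
    by (rule rect_diag_mult_right[OF U'(1) r(1)])
  finally have "?M *\<^sub>v col V j = vec m (\<lambda>i. U $$ (i,j) * d j)"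
    using col_mult2[OF M V'(1), of j] j r by (intro eq_vecI) auto
  then have "cmod (d j) = vnorm (?M *\<^sub>v col V j)"
    using vnorm_unitary_col_scaled[OF U, of j] j r by simp
  also have "\<dots> \<le> spec_norm ?M"
  proof (rule vnorm_le_spec_norm[OF M])
    have "col V j = vec n (\<lambda>i. V $$ (i,j) * 1)" using V'(1) j r by (intro eq_vecI) auto
    then show "vnorm (col V j) \<le> 1" using vnorm_unitary_col_scaled[OF V, of j 1] j r by simp
  qed (use V'(1) in auto)
  finally show ?thesis .
qed

lemma inverse_singular_value_sq_bounds:
  assumes U: "unitary_mat m U" and V: "unitary_mat n V" and r: "r \<le> m" "r \<le> n"
    and pos: "\<forall>i<r. 0 < \<sigma> i" and j: "j < r"
    and A: "A = U * sv_block m n r \<sigma> * mat_adjoint V"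
  shows "1 / (spec_norm A)\<^sup>2 \<le> (1 / \<sigma> j)\<^sup>2" and "(1 / \<sigma> j)\<^sup>2 \<le> (spec_norm (mp_inverse A))\<^sup>2"
proof -
  have \<sigma>j: "0 < \<sigma> j" using pos j by blast
  have "\<sigma> j \<le> spec_norm A"
    using norm_le_spec_norm_unitary_conj_rect_diag[OF U V r j, of "\<lambda>i. complex_of_real (\<sigma> i)"] \<sigma>j
    by (simp add: A sv_block_eq_rect_diag[OF r])
  then show "1 / (spec_norm A)\<^sup>2 \<le> (1 / \<sigma> j)\<^sup>2"
    using \<sigma>j by (simp add: power_one_over divide_right_mono frac_le power_mono)
  have "1 / \<sigma> j \<le> spec_norm (mp_inverse A)"
    using norm_le_spec_norm_unitary_conj_rect_diag[OF V U r(2,1) j, of "\<lambda>i. complex_of_real (1 / \<sigma> i)"] \<sigma>j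
    by (simp add: A mp_inverse_svd[OF U V r pos] norm_divide)
  then show "(1 / \<sigma> j)\<^sup>2 \<le> (spec_norm (mp_inverse A))\<^sup>2"
    using \<sigma>j by (intro power_mono) simp_all
qed

subsection \<open>Two singular value decompositions\<close>

context
  fixes A B U V Ut Vt :: "complex mat" and m n r s :: nat and \<sigma> \<sigma>t :: "nat \<Rightarrow> real"
  assumes U: "unitary_mat m U" and V: "unitary_mat n V"
    and Ut: "unitary_mat m Ut" and Vt: "unitary_mat n Vt"
    and rA: "r \<le> m" "r \<le> n" and sB: "s \<le> m" "s \<le> n"
    and \<sigma>_pos: "\<forall>i<r. 0 < \<sigma> i" and \<sigma>t_pos: "\<forall>i<s. 0 < \<sigma>t i"
    and svdA: "A = U * sv_block m n r \<sigma> * mat_adjoint V"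
    and svdB: "B = Ut * sv_block m n s \<sigma>t * mat_adjoint Vt"
begin

lemma svd_pair_dims:
  "dim_row U = m" "dim_col U = m" "dim_row Ut = m" "dim_col Ut = m"
  "dim_row V = n" "dim_col V = n" "dim_row Vt = n" "dim_col Vt = n"
  using U V Ut Vt unfolding unitary_mat_def by auto

lemma svd_pair_carrier:
  "A \<in> carrier_mat m n" "B \<in> carrier_mat m n"
  "mp_inverse A \<in> carrier_mat n m" "mp_inverse B \<in> carrier_mat n m"
  using unitary_matD[OF U] unitary_matD[OF V] unitary_matD[OF Ut] unitary_matD[OF Vt]
  unfolding svdA svdB mp_inverse_svd[OF U V rA \<sigma>_pos] mp_inverse_svd[OF Ut Vt sB \<sigma>t_pos]
  unfolding sv_block_eq_rect_diag[OF rA] sv_block_eq_rect_diag[OF sB]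
  by (meson mult_carrier_mat rect_diag_carrier)+

lemma rotated_unitary_carrier:
  "mat_adjoint Ut * U \<in> carrier_mat m m" "mat_adjoint Vt * V \<in> carrier_mat n n"
  using unitary_matD(1,2)[OF U] unitary_matD(1,2)[OF V] unitary_matD(1,2)[OF Ut] unitary_matD(1,2)[OF Vt]
  by auto

lemma rotated_mp_inverse_diff:
  "mat_adjoint Vt * (mp_inverse B - mp_inverse A) * U = mat n m (\<lambda>(i,j).
      (if i < s then complex_of_real (1 / \<sigma>t i) * (mat_adjoint Ut * U) $$ (i,j) else 0)
    - (if j < r then (mat_adjoint Vt * V) $$ (i,j) * complex_of_real (1 / \<sigma> j) else 0))"
proof -
  let ?Sp = "rect_diag n m r (\<lambda>i. complex_of_real (1 / \<sigma> i))"
    and ?Stp = "rect_diag n m s (\<lambda>i. complex_of_real (1 / \<sigma>t i))"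
  have "mat_adjoint Vt * (mp_inverse B - mp_inverse A) * U
      = mat_adjoint Vt * mp_inverse B * U - mat_adjoint Vt * mp_inverse A * U"
    using svd_pair_carrier unitary_matD(1)[OF U] unitary_matD(2)[OF Vt]
    by (intro mult_minus_mult_distrib_mat)
  also have "mat_adjoint Vt * mp_inverse B * U = ?Stp * (mat_adjoint Ut * U)"
    unfolding mp_inverse_svd[OF Ut Vt sB \<sigma>t_pos, folded svdB]
    using unitary_matD(4)[OF Ut] unitary_matD(4)[OF U]
    by (simp add: svd_pair_dims assoc_mult_mat_dims unitary_adjoint_mult_cancel[OF Vt])
  also have "mat_adjoint Vt * mp_inverse A * U = (mat_adjoint Vt * V) * ?Sp"
    unfolding mp_inverse_svd[OF U V rA \<sigma>_pos, folded svdA]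
    using unitary_matD(4)[OF U] by (simp add: svd_pair_dims assoc_mult_mat_dims)
  also have "?Stp * (mat_adjoint Ut * U) - (mat_adjoint Vt * V) * ?Sp = mat n m (\<lambda>(i,j).
      (if i < s then complex_of_real (1 / \<sigma>t i) * (mat_adjoint Ut * U) $$ (i,j) else 0)
    - (if j < r then (mat_adjoint Vt * V) $$ (i,j) * complex_of_real (1 / \<sigma> j) else 0))"
    unfolding rect_diag_mult_left[OF rotated_unitary_carrier(1) sB(1)]
      rect_diag_mult_right[OF rotated_unitary_carrier(2) rA(2)]
    by (intro eq_matI) auto
  finally show ?thesis .
qed

lemma rotated_mp_inverse_perturbation:
  "mat_adjoint Vt * (mp_inverse B * (B - A) * mp_inverse A) * U = mat n m (\<lambda>(i,j).
     if i < s \<and> j < r then (mat_adjoint Vt * V) $$ (i,j) * complex_of_real (1 / \<sigma> j)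
       - complex_of_real (1 / \<sigma>t i) * (mat_adjoint Ut * U) $$ (i,j) else 0)"
proof -
  let ?S = "rect_diag m n r (\<lambda>i. complex_of_real (\<sigma> i))"
    and ?St = "rect_diag m n s (\<lambda>i. complex_of_real (\<sigma>t i))"
    and ?Sp = "rect_diag n m r (\<lambda>i. complex_of_real (1 / \<sigma> i))"
    and ?Stp = "rect_diag n m s (\<lambda>i. complex_of_real (1 / \<sigma>t i))"
  note A_eq = svdA[unfolded sv_block_eq_rect_diag[OF rA]]
    and B_eq = svdB[unfolded sv_block_eq_rect_diag[OF sB]]
    and Ap_eq = mp_inverse_svd[OF U V rA \<sigma>_pos, folded svdA]
    and Bp_eq = mp_inverse_svd[OF Ut Vt sB \<sigma>t_pos, folded svdB]
  note cancel = unitary_adjoint_mult_cancel[OF U] unitary_adjoint_mult_cancel[OF V]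
    unitary_adjoint_mult_cancel[OF Ut] unitary_adjoint_mult_cancel[OF Vt]
  have "mat_adjoint Vt * (mp_inverse B * (B - A) * mp_inverse A) * U
      = mat_adjoint Vt * (mp_inverse B * B * mp_inverse A - mp_inverse B * A * mp_inverse A) * U"
    using svd_pair_carrier by (simp add: mult_minus_mult_distrib_mat[of _ n m])
  also have "\<dots> = mat_adjoint Vt * (mp_inverse B * B * mp_inverse A) * U
      - mat_adjoint Vt * (mp_inverse B * A * mp_inverse A) * U"
    using svd_pair_carrier unitary_matD(1)[OF U] unitary_matD(2)[OF Vt]
    by (intro mult_minus_mult_distrib_mat[where k = n and n = n and m = m and l = m])
      (meson mult_carrier_mat)+
  also have "mat_adjoint Vt * (mp_inverse B * B * mp_inverse A) * U
      = (?Stp * ?St) * ((mat_adjoint Vt * V) * ?Sp)"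
    unfolding Bp_eq Ap_eq unfolding B_eq using unitary_matD(4)[OF U]
    by (simp add: svd_pair_dims assoc_mult_mat_dims cancel)
  also have "mat_adjoint Vt * (mp_inverse B * A * mp_inverse A) * U
      = ?Stp * ((mat_adjoint Ut * U) * (?S * ?Sp))"
    unfolding Bp_eq Ap_eq unfolding A_eq using unitary_matD(4)[OF U]
    by (simp add: svd_pair_dims assoc_mult_mat_dims cancel)
  also have "?Stp * ?St = rect_diag n n s (\<lambda>i. 1)"
    using sB \<sigma>t_pos by (simp add: rect_diag_mult_rect_diag) (intro rect_diag_cong; force)
  also have "?S * ?Sp = rect_diag m m r (\<lambda>i. 1)"
    using rA \<sigma>_pos by (simp add: rect_diag_mult_rect_diag) (intro rect_diag_cong; force)
  also have "rect_diag n n s (\<lambda>i. 1) * ((mat_adjoint Vt * V) * ?Sp)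
      - ?Stp * ((mat_adjoint Ut * U) * rect_diag m m r (\<lambda>i. 1)) = mat n m (\<lambda>(i,j).
     if i < s \<and> j < r then (mat_adjoint Vt * V) $$ (i,j) * complex_of_real (1 / \<sigma> j)
       - complex_of_real (1 / \<sigma>t i) * (mat_adjoint Ut * U) $$ (i,j) else 0)"
    unfolding rect_diag_mult_right[OF rotated_unitary_carrier(2) rA(2)]
      rect_diag_mult_right[OF rotated_unitary_carrier(1) rA(1)]
      rect_diag_mult_left[OF mat_carrier sB(2)] rect_diag_mult_left[OF mat_carrier sB(1)]
    using sB by (intro eq_matI) auto
  finally show ?thesis .
qed

lemma frob_norm_mp_inverse_diff_sq:
  defines "X \<equiv> mat_adjoint (col_block Ut 0 s) * col_block U r m"
    and "Y \<equiv> mat_adjoint (col_block Vt s n) * col_block V 0 r"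
  shows "(frob_norm (mp_inverse B - mp_inverse A))\<^sup>2 =
      (\<Sum>i<s. \<Sum>j<m - r. (cmod (X $$ (i,j)))\<^sup>2 / (\<sigma>t i)\<^sup>2)
    + (\<Sum>i<n - s. \<Sum>j<r. (cmod (Y $$ (i,j)))\<^sup>2 / (\<sigma> j)\<^sup>2)
    + (frob_norm (mp_inverse B * (B - A) * mp_inverse A))\<^sup>2"
proof -
  define Q where "Q = mat_adjoint Ut * U"
  define W where "W = mat_adjoint Vt * V"
  let ?P = "mat_adjoint Vt * (mp_inverse B - mp_inverse A) * U"
    and ?R = "mat_adjoint Vt * (mp_inverse B * (B - A) * mp_inverse A) * U"
  let ?g1 = "\<lambda>i j. if i < s \<and> r \<le> j \<and> j < m then (cmod (Q $$ (i,j)))\<^sup>2 / (\<sigma>t i)\<^sup>2 else 0"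
    and ?g2 = "\<lambda>i j. if s \<le> i \<and> i < n \<and> j < r then (cmod (W $$ (i,j)))\<^sup>2 / (\<sigma> j)\<^sup>2 else 0"
  have "frob_norm (mp_inverse B - mp_inverse A) = frob_norm ?P"
    using svd_pair_carrier by (intro frob_norm_unitary_conj[OF Vt U, symmetric]) auto
  moreover have "frob_norm (mp_inverse B * (B - A) * mp_inverse A) = frob_norm ?R"
    using svd_pair_carrier
    by (intro frob_norm_unitary_conj[OF Vt U, symmetric]) (meson minus_carrier_mat mult_carrier_mat)
  moreover have "(cmod (?P $$ (i,j)))\<^sup>2 = (cmod (?R $$ (i,j)))\<^sup>2 + ?g1 i j + ?g2 i j"
    if "i < n" "j < m" for i j
    unfolding rotated_mp_inverse_diff rotated_mp_inverse_perturbation Q_def[symmetric] W_def[symmetric]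
    using that by (auto simp: norm_minus_commute norm_divide power_divide)
  ultimately have "(frob_norm (mp_inverse B - mp_inverse A))\<^sup>2
      = (frob_norm (mp_inverse B * (B - A) * mp_inverse A))\<^sup>2
        + (\<Sum>i<n. \<Sum>j<m. ?g1 i j) + (\<Sum>i<n. \<Sum>j<m. ?g2 i j)"
    by (simp add: frob_norm_sq svd_pair_dims sum.distrib)
  moreover have "(\<Sum>i<n. \<Sum>j<m. ?g1 i j) = (\<Sum>i<s. \<Sum>j<m - r. (cmod (X $$ (i,j)))\<^sup>2 / (\<sigma>t i)\<^sup>2)"
    using sum_sum_block_indicator[OF sB(2) order.refl[of m], of 0 r
        "\<lambda>i j. (cmod (Q $$ (i,j)))\<^sup>2 / (\<sigma>t i)\<^sup>2"]
      index_adjoint_col_block_mult[OF unitary_matD(1)[OF Ut] unitary_matD(1)[OF U]] sB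
    by (simp add: X_def Q_def)
  moreover have "(\<Sum>i<n. \<Sum>j<m. ?g2 i j) = (\<Sum>i<n - s. \<Sum>j<r. (cmod (Y $$ (i,j)))\<^sup>2 / (\<sigma> j)\<^sup>2)"
    using sum_sum_block_indicator[OF order.refl[of n] rA(1), of s 0
        "\<lambda>i j. (cmod (W $$ (i,j)))\<^sup>2 / (\<sigma> j)\<^sup>2"]
      index_adjoint_col_block_mult[OF unitary_matD(1)[OF Vt] unitary_matD(1)[OF V]] rA
    by (simp add: Y_def W_def)
  ultimately show ?thesis by simp
qed

lemma frob_norm_mp_inverse_diff_bounds:
  defines "X \<equiv> mat_adjoint (col_block Ut 0 s) * col_block U r m"
    and "Y \<equiv> mat_adjoint (col_block Vt s n) * col_block V 0 r"
  shows "(frob_norm (mp_inverse B - mp_inverse A))\<^sup>2 \<le>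
      (spec_norm (mp_inverse B))\<^sup>2 * (frob_norm X)\<^sup>2 + (spec_norm (mp_inverse A))\<^sup>2 * (frob_norm Y)\<^sup>2
    + (frob_norm (mp_inverse B * (B - A) * mp_inverse A))\<^sup>2"
    and "(frob_norm X)\<^sup>2 / (spec_norm B)\<^sup>2 + (frob_norm Y)\<^sup>2 / (spec_norm A)\<^sup>2
    + (frob_norm (mp_inverse B * (B - A) * mp_inverse A))\<^sup>2 \<le> (frob_norm (mp_inverse B - mp_inverse A))\<^sup>2"
proof -
  have dims: "dim_row X = s" "dim_col X = m - r" "dim_row Y = n - s" "dim_col Y = r"
    unfolding X_def Y_def by (simp_all add: svd_pair_dims)
  note B_bounds = inverse_singular_value_sq_bounds[OF Ut Vt sB \<sigma>t_pos _ svdB]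
    and A_bounds = inverse_singular_value_sq_bounds[OF U V rA \<sigma>_pos _ svdA]
  have "1 / (spec_norm B)\<^sup>2 \<le> (1 / \<sigma>t i)\<^sup>2 \<and> (1 / \<sigma>t i)\<^sup>2 \<le> (spec_norm (mp_inverse B))\<^sup>2"
    if "i < dim_row X" for i
    using B_bounds that dims by simp
  from frob_norm_sq_weighted_bounds[of X _ "\<lambda>i j. (1 / \<sigma>t i)\<^sup>2", OF this]
  have X_bounds:
    "(frob_norm X)\<^sup>2 / (spec_norm B)\<^sup>2 \<le> (\<Sum>i<s. \<Sum>j<m - r. (cmod (X $$ (i,j)))\<^sup>2 / (\<sigma>t i)\<^sup>2)"
    "(\<Sum>i<s. \<Sum>j<m - r. (cmod (X $$ (i,j)))\<^sup>2 / (\<sigma>t i)\<^sup>2)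
      \<le> (spec_norm (mp_inverse B))\<^sup>2 * (frob_norm X)\<^sup>2"
    by (simp_all add: dims power_one_over)
  have "1 / (spec_norm A)\<^sup>2 \<le> (1 / \<sigma> j)\<^sup>2 \<and> (1 / \<sigma> j)\<^sup>2 \<le> (spec_norm (mp_inverse A))\<^sup>2"
    if "j < dim_col Y" for j
    using A_bounds that dims by simp
  from frob_norm_sq_weighted_bounds[of Y _ "\<lambda>i j. (1 / \<sigma> j)\<^sup>2", OF this]
  have Y_bounds:
    "(frob_norm Y)\<^sup>2 / (spec_norm A)\<^sup>2 \<le> (\<Sum>i<n - s. \<Sum>j<r. (cmod (Y $$ (i,j)))\<^sup>2 / (\<sigma> j)\<^sup>2)"
    "(\<Sum>i<n - s. \<Sum>j<r. (cmod (Y $$ (i,j)))\<^sup>2 / (\<sigma> j)\<^sup>2)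
      \<le> (spec_norm (mp_inverse A))\<^sup>2 * (frob_norm Y)\<^sup>2"
    by (simp_all add: dims power_one_over)
  show "(frob_norm (mp_inverse B - mp_inverse A))\<^sup>2 \<le>
      (spec_norm (mp_inverse B))\<^sup>2 * (frob_norm X)\<^sup>2 + (spec_norm (mp_inverse A))\<^sup>2 * (frob_norm Y)\<^sup>2
    + (frob_norm (mp_inverse B * (B - A) * mp_inverse A))\<^sup>2"
    and "(frob_norm X)\<^sup>2 / (spec_norm B)\<^sup>2 + (frob_norm Y)\<^sup>2 / (spec_norm A)\<^sup>2
    + (frob_norm (mp_inverse B * (B - A) * mp_inverse A))\<^sup>2 \<le> (frob_norm (mp_inverse B - mp_inverse A))\<^sup>2"
    using X_bounds Y_bounds
    unfolding frob_norm_mp_inverse_diff_sq X_def[symmetric] Y_def[symmetric] by simp_all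
qed

end

text \<open>
  Only the two decompositions are used.
\<close>

theorem corollary2p3:
  fixes A B U V Ut Vt :: "complex mat" and m n r s :: nat and \<sigma> \<sigma>t :: "nat \<Rightarrow> real"
  assumes A: "A \<in> carrier_mat m n" and B: "B \<in> carrier_mat m n"
    and rkA: "vec_space.rank m A = r" and rkB: "vec_space.rank m B = s"
    and rA: "r \<le> m" "r \<le> n" and sB: "s \<le> m" "s \<le> n"
    and U: "unitary_mat m U" and V: "unitary_mat n V"
    and Ut: "unitary_mat m Ut" and Vt: "unitary_mat n Vt"
    and \<sigma>_pos: "\<forall>i<r. 0 < \<sigma> i" and \<sigma>_mono: "\<forall>i j. i \<le> j \<longrightarrow> j < r \<longrightarrow> \<sigma> j \<le> \<sigma> i"
    and \<sigma>t_pos: "\<forall>i<s. 0 < \<sigma>t i" and \<sigma>t_mono: "\<forall>i j. i \<le> j \<longrightarrow> j < s \<longrightarrow> \<sigma>t j \<le> \<sigma>t i"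
    and svdA: "A = U * sv_block m n r \<sigma> * mat_adjoint V"
    and svdB: "B = Ut * sv_block m n s \<sigma>t * mat_adjoint Vt"
  defines "U1 \<equiv> col_block U 0 r" and "U2 \<equiv> col_block U r m"
    and "V1 \<equiv> col_block V 0 r" and "V2 \<equiv> col_block V r n"
    and "Ut1 \<equiv> col_block Ut 0 s" and "Ut2 \<equiv> col_block Ut s m"
    and "Vt1 \<equiv> col_block Vt 0 s" and "Vt2 \<equiv> col_block Vt s n"
    and "E \<equiv> B - A"
  shows
    "((frob_norm (mp_inverse B - mp_inverse A))\<^sup>2 \<le>
       (spec_norm (mp_inverse B))\<^sup>2 * (frob_norm (mat_adjoint Ut1 * U2))\<^sup>2
     + (spec_norm (mp_inverse A))\<^sup>2 * (frob_norm (mat_adjoint Vt2 * V1))\<^sup>2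
     + (frob_norm (mp_inverse B * E * mp_inverse A))\<^sup>2) \<and>
    ((frob_norm (mp_inverse B - mp_inverse A))\<^sup>2 \<le>
       (spec_norm (mp_inverse A))\<^sup>2 * (frob_norm (mat_adjoint Ut2 * U1))\<^sup>2
     + (spec_norm (mp_inverse B))\<^sup>2 * (frob_norm (mat_adjoint Vt1 * V2))\<^sup>2
     + (frob_norm (mp_inverse A * E * mp_inverse B))\<^sup>2) \<and>
    ((frob_norm (mp_inverse B - mp_inverse A))\<^sup>2 \<ge>
       (frob_norm (mat_adjoint Ut1 * U2))\<^sup>2 / (spec_norm B)\<^sup>2
     + (frob_norm (mat_adjoint Vt2 * V1))\<^sup>2 / (spec_norm A)\<^sup>2
     + (frob_norm (mp_inverse B * E * mp_inverse A))\<^sup>2) \<and>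
    ((frob_norm (mp_inverse B - mp_inverse A))\<^sup>2 \<ge>
       (frob_norm (mat_adjoint Ut2 * U1))\<^sup>2 / (spec_norm A)\<^sup>2
     + (frob_norm (mat_adjoint Vt1 * V2))\<^sup>2 / (spec_norm B)\<^sup>2
     + (frob_norm (mp_inverse A * E * mp_inverse B))\<^sup>2)"
proof -
  note bounds_AB = frob_norm_mp_inverse_diff_bounds[OF U V Ut Vt rA sB \<sigma>_pos \<sigma>t_pos svdA svdB]
    and bounds_BA = frob_norm_mp_inverse_diff_bounds[OF Ut Vt U V sB rA \<sigma>t_pos \<sigma>_pos svdB svdA]
    and carrier = svd_pair_carrier[OF U V Ut Vt rA sB \<sigma>_pos \<sigma>t_pos svdA svdB]
    and dims = svd_pair_dims[OF U V Ut Vt rA sB \<sigma>_pos \<sigma>t_pos svdA svdB]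
  have "frob_norm (mp_inverse A - mp_inverse B) = frob_norm (mp_inverse B - mp_inverse A)"
    using carrier by (intro frob_norm_minus_commute)
  moreover have "frob_norm (mp_inverse A * (A - B) * mp_inverse B)
      = frob_norm (mp_inverse A * E * mp_inverse B)"
    unfolding E_def using carrier by (intro frob_norm_mult_minus_commute)
  moreover have "frob_norm (mat_adjoint U1 * Ut2) = frob_norm (mat_adjoint Ut2 * U1)"
    and "frob_norm (mat_adjoint V2 * Vt1) = frob_norm (mat_adjoint Vt1 * V2)"
    unfolding U1_def Ut2_def V2_def Vt1_def using dims
    by (simp_all add: frob_norm_adjoint_mult_commute)
  ultimately show ?thesis
    using bounds_AB bounds_BA
    unfolding U1_def U2_def V1_def V2_def Ut1_def Ut2_def Vt1_def Vt2_def E_def by simp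
qed

end
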